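(* For $n\ge 3$, the commutator subgroup $[P_n,P_n]$ of the pure braid group $P_n$ is densely ordered by the restriction of the Dehornoy ordering of $B_n$.
   Context: $B_n$ is the Artin braid group with generators $\sigma_1,\dots,\sigma_{n-1}$; $P_n$ is the kernel of the natural map $B_n\to S_n$ to the symmetric group. A word in the generators is $i$-positive if it contains only $\sigma_1,\dots,\sigma_i$ and their inverses, $\sigma_i$ occurs, and every occurrence of $\sigma_i$ has positive exponent; a braid is $i$-positive if some representative word is. The Dehornoy ordering is the left-invariant total order on $B_n$ whose positive cone consists of all braids that are $i$-positive for some $i$. A subgroup is densely ordered if it has no least positive element (equivalently, between any two of its elements lies a third). *)

theory Defs
  imports Main
begin

text \<open>Braid words: a letter (i, True) stands for sigma_i, (i, False) for sigma_i inverse.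
  The braid group B_n is the set of words over indices 1..n-1 modulo braid_eq n.\<close>

type_synonym bword = "(nat \<times> bool) list"

definition valid_word :: "nat \<Rightarrow> bword \<Rightarrow> bool" where
  "valid_word n w \<longleftrightarrow> (\<forall>(i, b) \<in> set w. 1 \<le> i \<and> i < n)"

definition inv_word :: "bword \<Rightarrow> bword" where
  "inv_word w = rev (map (\<lambda>(i, b). (i, \<not> b)) w)"

inductive braid_eq :: "nat \<Rightarrow> bword \<Rightarrow> bword \<Rightarrow> bool" for n :: nat where
  refl: "braid_eq n w w"
| sym: "braid_eq n u w \<Longrightarrow> braid_eq n w u"
| trans: "braid_eq n u v \<Longrightarrow> braid_eq n v w \<Longrightarrow> braid_eq n u w"
| ctx: "braid_eq n x y \<Longrightarrow> valid_word n u \<Longrightarrow> valid_word n v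
          \<Longrightarrow> braid_eq n (u @ x @ v) (u @ y @ v)"
| cancel: "1 \<le> i \<Longrightarrow> i < n \<Longrightarrow> braid_eq n [(i, b), (i, \<not> b)] []"
| far_comm: "1 \<le> i \<Longrightarrow> i + 2 \<le> j \<Longrightarrow> j < n
          \<Longrightarrow> braid_eq n [(i, True), (j, True)] [(j, True), (i, True)]"
| braid_rel: "1 \<le> i \<Longrightarrow> i + 1 < n
          \<Longrightarrow> braid_eq n [(i, True), (i + 1, True), (i, True)]
                         [(i + 1, True), (i, True), (i + 1, True)]"

definition adj_transp :: "nat \<Rightarrow> nat \<Rightarrow> nat" where
  "adj_transp i = (\<lambda>k. if k = i then Suc i else if k = Suc i then i else k)"

fun perm_of_word :: "bword \<Rightarrow> nat \<Rightarrow> nat" where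
  "perm_of_word [] = id"
| "perm_of_word ((i, b) # w) = adj_transp i \<circ> perm_of_word w"

definition pure_word :: "nat \<Rightarrow> bword \<Rightarrow> bool" where
  "pure_word n w \<longleftrightarrow> valid_word n w \<and> perm_of_word w = id"

definition commutator_word :: "bword \<Rightarrow> bword \<Rightarrow> bword" where
  "commutator_word a b = inv_word a @ inv_word b @ a @ b"

text \<open>The commutator subgroup [P_n,P_n]: products of commutators of pure braids
  (closed under inverses since [a,b]^{-1} = [b,a]), as a set of words closed under braid_eq.\<close>
inductive comm_sub :: "nat \<Rightarrow> bword \<Rightarrow> bool" for n :: nat where
  nil: "comm_sub n []"
| snoc: "comm_sub n w \<Longrightarrow> pure_word n a \<Longrightarrow> pure_word n b
          \<Longrightarrow> comm_sub n (w @ commutator_word a b)"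
| eq: "comm_sub n w \<Longrightarrow> braid_eq n w w' \<Longrightarrow> valid_word n w' \<Longrightarrow> comm_sub n w'"

definition i_positive :: "nat \<Rightarrow> bword \<Rightarrow> bool" where
  "i_positive i w \<longleftrightarrow> (\<forall>(j, b) \<in> set w. 1 \<le> j \<and> j \<le> i)
                        \<and> (i, True) \<in> set w \<and> (i, False) \<notin> set w"

definition dehornoy_pos :: "nat \<Rightarrow> bword \<Rightarrow> bool" where
  "dehornoy_pos n w \<longleftrightarrow> (\<exists>i w'. 1 \<le> i \<and> i < n \<and> i_positive i w' \<and> braid_eq n w w')"

definition dehornoy_less :: "nat \<Rightarrow> bword \<Rightarrow> bword \<Rightarrow> bool" where
  "dehornoy_less n u w \<longleftrightarrow> dehornoy_pos n (inv_word u @ w)"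

definition densely_ordered :: "nat \<Rightarrow> (bword \<Rightarrow> bool) \<Rightarrow> bool" where
  "densely_ordered n H \<longleftrightarrow>
     (\<forall>h. H h \<and> dehornoy_pos n h \<longrightarrow>
        (\<exists>h'. H h' \<and> dehornoy_pos n h' \<and> dehornoy_less n h' h))"

end

theory Submission
  imports Defs
begin

text \<open>Elements of $[P_n,P_n]$ have exponent sum $0$, so a positive one is represented by an
  $i$-positive word $w$ with $i \<ge> 2$. For a word $g$ in $\sigma_1^{\pm 1}$ the commutator
  $c_g = [g\sigma_2^2g^{-1}, g\sigma_1^2g^{-1}]$ lies in $[P_n,P_n]$ and
  $c_g^{-1} = g(\sigma_1^{-1}\sigma_2)^3g^{-1}$ is $\sigma_2$-positive, so $h c_g < h$.
  It remains to keep $h c_g$ positive: for $i \<ge> 3$ already $w c_1$ is $i$-positive, and for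
  $i = 2$ write $w = p\,\sigma_2\,s$ with $s$ a word in $\sigma_1^{\pm 1}$ and take
  $g = s^{-1}\sigma_1$, so that
  $w c_g = p\,\sigma_2\sigma_1\sigma_2^{-2}\sigma_1^{-2}\sigma_2^2\sigma_1^2\,g^{-1}
   = p\,\sigma_1^{-2}\sigma_2\sigma_1^{-1}\sigma_2^2\sigma_1^2\,g^{-1}$.\<close>

abbreviation \<sigma> :: "nat \<Rightarrow> nat \<times> bool" where "\<sigma> i \<equiv> (i, True)"
abbreviation \<sigma>_inv :: "nat \<Rightarrow> nat \<times> bool" where "\<sigma>_inv i \<equiv> (i, False)"

lemma valid_word_Nil [simp]: "valid_word n []"
  by (simp add: valid_word_def)

lemma valid_word_Cons [simp]: "valid_word n ((i, b) # w) \<longleftrightarrow> 1 \<le> i \<and> i < n \<and> valid_word n w"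
  by (auto simp: valid_word_def)

lemma valid_word_append [simp]: "valid_word n (u @ v) \<longleftrightarrow> valid_word n u \<and> valid_word n v"
  by (auto simp: valid_word_def)

lemma valid_word_take: "valid_word n w \<Longrightarrow> valid_word n (take k w)"
  by (auto simp: valid_word_def dest: in_set_takeD)

lemma valid_word_drop: "valid_word n w \<Longrightarrow> valid_word n (drop k w)"
  by (auto simp: valid_word_def dest: in_set_dropD)

lemma valid_word_if_sigma1_word: "set g \<subseteq> {\<sigma> 1, \<sigma>_inv 1} \<Longrightarrow> 2 \<le> n \<Longrightarrow> valid_word n g"
  by (auto simp: valid_word_def)

lemma inv_word_Nil [simp]: "inv_word [] = []"
  by (simp add: inv_word_def)

lemma inv_word_Cons [simp]: "inv_word ((i, b) # w) = inv_word w @ [(i, \<not> b)]"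
  by (simp add: inv_word_def)

lemma inv_word_append [simp]: "inv_word (u @ v) = inv_word v @ inv_word u"
  by (simp add: inv_word_def)

lemma inv_word_inv_word [simp]: "inv_word (inv_word w) = w"
  by (induction w) (auto simp: inv_word_def)

lemma mem_set_inv_word [simp]: "(i, b) \<in> set (inv_word w) \<longleftrightarrow> (i, \<not> b) \<in> set w"
  by (force simp: inv_word_def)

lemma valid_word_inv_word [simp]: "valid_word n (inv_word w) \<longleftrightarrow> valid_word n w"
  by (auto simp: valid_word_def inv_word_def)

lemma inv_word_commutator_word: "inv_word (commutator_word a b) = commutator_word b a"
  by (simp add: commutator_word_def)

lemma valid_word_commutator_word [simp]:
  "valid_word n (commutator_word a b) \<longleftrightarrow> valid_word n a \<and> valid_word n b"
  by (auto simp: commutator_word_def)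

declare braid_eq.trans [trans]

lemma braid_eq_in_context:
  "braid_eq n x y \<Longrightarrow> valid_word n u \<Longrightarrow> valid_word n v
   \<Longrightarrow> l = u @ x @ v \<Longrightarrow> r = u @ y @ v \<Longrightarrow> braid_eq n l r"
  using braid_eq.ctx by blast

lemma braid_eq_at:
  assumes "braid_eq n l r" and "valid_word n w" and "take (length l) (drop k w) = l"
    and "w' = take k w @ r @ drop (k + length l) w"
  shows "braid_eq n w w'"
proof (rule braid_eq_in_context[OF assms(1) valid_word_take valid_word_drop])
  show "w = take k w @ l @ drop (k + length l) w"
    using assms(3) by (metis append_take_drop_id drop_drop add.commute)
qed (use assms in auto)

lemma braid_eq_inv_word_cancel: "valid_word n w \<Longrightarrow> braid_eq n (inv_word w @ w) []"
proof (induction w)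
  case Nil
  then show ?case by (simp add: braid_eq.refl)
next
  case (Cons a w)
  obtain i b where a: "a = (i, b)" by force
  with Cons.prems have "1 \<le> i" "i < n" "valid_word n w" by auto
  then have "braid_eq n (inv_word w @ [(i, \<not> b), (i, \<not> \<not> b)] @ w) (inv_word w @ [] @ w)"
    by (intro braid_eq.ctx cancel) auto
  then show ?case using Cons.IH \<open>valid_word n w\<close> a by (auto intro: braid_eq.trans)
qed

lemma braid_eq_cancel_inv_word: "valid_word n w \<Longrightarrow> braid_eq n (w @ inv_word w) []"
  using braid_eq_inv_word_cancel[of n "inv_word w"] by simp

lemma braid_eq_commutator_word_conj:
  assumes "valid_word n g" "valid_word n a" "valid_word n b"
  shows "braid_eq n (commutator_word (g @ a @ inv_word g) (g @ b @ inv_word g))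
                    (g @ commutator_word a b @ inv_word g)"
proof -
  note cancel = braid_eq_inv_word_cancel[OF assms(1)]
  have "braid_eq n (commutator_word (g @ a @ inv_word g) (g @ b @ inv_word g))
      (g @ inv_word a @ inv_word b @ inv_word g @ g @ a @ inv_word g @ g @ b @ inv_word g)"
    by (rule braid_eq_in_context[OF cancel, of "g @ inv_word a"]) (use assms in \<open>auto simp: commutator_word_def\<close>)
  also have "braid_eq n \<dots> (g @ inv_word a @ inv_word b @ a @ inv_word g @ g @ b @ inv_word g)"
    by (rule braid_eq_in_context[OF cancel, of "g @ inv_word a @ inv_word b"]) (use assms in auto)
  also have "braid_eq n \<dots> (g @ commutator_word a b @ inv_word g)"
    by (rule braid_eq_in_context[OF cancel, of "g @ inv_word a @ inv_word b @ a"])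
       (use assms in \<open>auto simp: commutator_word_def\<close>)
  finally show ?thesis .
qed

lemma braid_sigma12:
  assumes "3 \<le> n"
  shows "braid_eq n [\<sigma> 1, \<sigma> 2, \<sigma> 1] [\<sigma> 2, \<sigma> 1, \<sigma> 2]"
  using braid_rel[of 1 n] assms by (simp add: numeral_2_eq_2)

lemma braid_cancel_sigma12:
  assumes "3 \<le> n" and "i \<in> {1, 2}"
  shows "braid_eq n [(i, b), (i, \<not> b)] []"
  using cancel[of i n b] assms by auto

lemma braid_eq_commutator_sigma1_sq_sigma2_sq:
  assumes n: "3 \<le> n"
  shows "braid_eq n (commutator_word [\<sigma> 1, \<sigma> 1] [\<sigma> 2, \<sigma> 2])
                    [\<sigma>_inv 1, \<sigma> 2, \<sigma>_inv 1, \<sigma> 2, \<sigma>_inv 1, \<sigma> 2]"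
proof -
  note rel = braid_sigma12[OF n] and cancel = braid_cancel_sigma12[OF n]
  note insert = braid_eq.sym[OF cancel]
  have "braid_eq n (commutator_word [\<sigma> 1, \<sigma> 1] [\<sigma> 2, \<sigma> 2])
      [\<sigma>_inv 1, \<sigma>_inv 1, \<sigma>_inv 2, \<sigma>_inv 2, \<sigma> 1, \<sigma> 1, \<sigma> 2, \<sigma> 1, \<sigma>_inv 1, \<sigma> 2]"
    by (rule braid_eq_at[OF insert[of 1 True], where k = 7]) (use n in \<open>simp_all add: commutator_word_def\<close>)
  also have "braid_eq n \<dots> [\<sigma>_inv 1, \<sigma>_inv 1, \<sigma>_inv 2, \<sigma>_inv 2, \<sigma> 1, \<sigma> 2, \<sigma> 1, \<sigma> 2, \<sigma>_inv 1, \<sigma> 2]"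
    by (rule braid_eq_at[OF rel, where k = 5]) (use n in simp_all)
  also have "braid_eq n \<dots> [\<sigma>_inv 1, \<sigma>_inv 1, \<sigma>_inv 2, \<sigma>_inv 2, \<sigma> 2, \<sigma> 1, \<sigma> 2, \<sigma> 2, \<sigma>_inv 1, \<sigma> 2]"
    by (rule braid_eq_at[OF rel, where k = 4]) (use n in simp_all)
  also have "braid_eq n \<dots> [\<sigma>_inv 1, \<sigma>_inv 1, \<sigma>_inv 2, \<sigma> 1, \<sigma> 2, \<sigma> 2, \<sigma>_inv 1, \<sigma> 2]"
    by (rule braid_eq_at[OF cancel[of 2 False], where k = 3]) (use n in simp_all)
  also have "braid_eq n \<dots> [\<sigma>_inv 1, \<sigma>_inv 1, \<sigma>_inv 2, \<sigma> 1, \<sigma> 2, \<sigma> 1, \<sigma>_inv 1, \<sigma> 2, \<sigma>_inv 1, \<sigma> 2]"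
    by (rule braid_eq_at[OF insert[of 1 True], where k = 5]) (use n in simp_all)
  also have "braid_eq n \<dots> [\<sigma>_inv 1, \<sigma>_inv 1, \<sigma>_inv 2, \<sigma> 2, \<sigma> 1, \<sigma> 2, \<sigma>_inv 1, \<sigma> 2, \<sigma>_inv 1, \<sigma> 2]"
    by (rule braid_eq_at[OF rel, where k = 3]) (use n in simp_all)
  also have "braid_eq n \<dots> [\<sigma>_inv 1, \<sigma>_inv 1, \<sigma> 1, \<sigma> 2, \<sigma>_inv 1, \<sigma> 2, \<sigma>_inv 1, \<sigma> 2]"
    by (rule braid_eq_at[OF cancel[of 2 False], where k = 2]) (use n in simp_all)
  also have "braid_eq n \<dots> [\<sigma>_inv 1, \<sigma> 2, \<sigma>_inv 1, \<sigma> 2, \<sigma>_inv 1, \<sigma> 2]"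
    by (rule braid_eq_at[OF cancel[of 1 False], where k = 1]) (use n in simp_all)
  finally show ?thesis .
qed

lemma braid_eq_sigma2_sigma1_sq_inv:
  assumes n: "3 \<le> n"
  shows "braid_eq n [\<sigma> 2, \<sigma> 1, \<sigma>_inv 2, \<sigma>_inv 2, \<sigma>_inv 1, \<sigma>_inv 1]
                    [\<sigma>_inv 1, \<sigma>_inv 1, \<sigma> 2, \<sigma>_inv 1]"
proof -
  note rel = braid_sigma12[OF n] and cancel = braid_cancel_sigma12[OF n]
  note insert = braid_eq.sym[OF cancel]
  have "braid_eq n [\<sigma> 2, \<sigma> 1, \<sigma>_inv 2, \<sigma>_inv 2, \<sigma>_inv 1, \<sigma>_inv 1]
      [\<sigma>_inv 1, \<sigma> 1, \<sigma> 2, \<sigma> 1, \<sigma>_inv 2, \<sigma>_inv 2, \<sigma>_inv 1, \<sigma>_inv 1]"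
    by (rule braid_eq_at[OF insert[of 1 False], where k = 0]) (use n in simp_all)
  also have "braid_eq n \<dots> [\<sigma>_inv 1, \<sigma> 2, \<sigma> 1, \<sigma> 2, \<sigma>_inv 2, \<sigma>_inv 2, \<sigma>_inv 1, \<sigma>_inv 1]"
    by (rule braid_eq_at[OF rel, where k = 1]) (use n in simp_all)
  also have "braid_eq n \<dots> [\<sigma>_inv 1, \<sigma> 2, \<sigma> 1, \<sigma>_inv 2, \<sigma>_inv 1, \<sigma>_inv 1]"
    by (rule braid_eq_at[OF cancel[of 2 True], where k = 3]) (use n in simp_all)
  also have "braid_eq n \<dots> [\<sigma>_inv 1, \<sigma>_inv 1, \<sigma> 1, \<sigma> 2, \<sigma> 1, \<sigma>_inv 2, \<sigma>_inv 1, \<sigma>_inv 1]"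
    by (rule braid_eq_at[OF insert[of 1 False], where k = 1]) (use n in simp_all)
  also have "braid_eq n \<dots> [\<sigma>_inv 1, \<sigma>_inv 1, \<sigma> 2, \<sigma> 1, \<sigma> 2, \<sigma>_inv 2, \<sigma>_inv 1, \<sigma>_inv 1]"
    by (rule braid_eq_at[OF rel, where k = 2]) (use n in simp_all)
  also have "braid_eq n \<dots> [\<sigma>_inv 1, \<sigma>_inv 1, \<sigma> 2, \<sigma> 1, \<sigma>_inv 1, \<sigma>_inv 1]"
    by (rule braid_eq_at[OF cancel[of 2 True], where k = 4]) (use n in simp_all)
  also have "braid_eq n \<dots> [\<sigma>_inv 1, \<sigma>_inv 1, \<sigma> 2, \<sigma>_inv 1]"
    by (rule braid_eq_at[OF cancel[of 1 True], where k = 3]) (use n in simp_all)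
  finally show ?thesis .
qed

definition exp_sum :: "bword \<Rightarrow> int" where
  "exp_sum w = (\<Sum>(i, b) \<leftarrow> w. if b then 1 else -1)"

lemma exp_sum_Nil [simp]: "exp_sum [] = 0"
  by (simp add: exp_sum_def)

lemma exp_sum_Cons [simp]: "exp_sum ((i, b) # w) = (if b then 1 else -1) + exp_sum w"
  by (simp add: exp_sum_def)

lemma exp_sum_append [simp]: "exp_sum (u @ v) = exp_sum u + exp_sum v"
  by (simp add: exp_sum_def)

lemma exp_sum_inv_word [simp]: "exp_sum (inv_word w) = - exp_sum w"
  by (induction w) auto

lemma braid_eq_exp_sum: "braid_eq n u w \<Longrightarrow> exp_sum u = exp_sum w"
  by (induction rule: braid_eq.induct) auto

lemma exp_sum_positive_word: "set w \<subseteq> {\<sigma> i} \<Longrightarrow> exp_sum w = int (length w)"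
  by (induction w) auto

lemma exp_sum_pos_if_1_positive:
  assumes pos: "i_positive 1 w"
  shows "0 < exp_sum w"
proof -
  have "set w \<subseteq> {\<sigma> 1}"
  proof
    fix x assume "x \<in> set w"
    moreover obtain j b where "x = (j, b)" by force
    ultimately show "x \<in> {\<sigma> 1}"
      using pos unfolding i_positive_def by (cases b) auto
  qed
  moreover have "w \<noteq> []" using pos by (auto simp: i_positive_def)
  ultimately show ?thesis by (simp add: exp_sum_positive_word)
qed

lemma perm_of_word_append [simp]: "perm_of_word (u @ v) = perm_of_word u \<circ> perm_of_word v"
  by (induction u rule: perm_of_word.induct) auto

lemma adj_transp_involutive: "adj_transp i \<circ> adj_transp i = id"
  by (auto simp: adj_transp_def fun_eq_iff)

lemma perm_of_word_cancel_inv_word: "perm_of_word (w @ inv_word w) = id"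
proof (induction w)
  case (Cons a w)
  obtain i b where "a = (i, b)" by force
  then have "perm_of_word (a # w @ inv_word (a # w))
      = adj_transp i \<circ> perm_of_word (w @ inv_word w) \<circ> adj_transp i"
    by (simp add: comp_assoc)
  also have "\<dots> = id"
    by (simp only: Cons.IH adj_transp_involutive comp_id)
  finally show ?case by simp
qed simp

lemma pure_word_conj:
  "valid_word n g \<Longrightarrow> pure_word n a \<Longrightarrow> pure_word n (g @ a @ inv_word g)"
  using perm_of_word_cancel_inv_word[of g] by (simp add: pure_word_def comp_assoc)

lemma pure_word_square: "1 \<le> i \<Longrightarrow> i < n \<Longrightarrow> pure_word n [(i, b), (i, b)]"
  by (simp add: pure_word_def adj_transp_involutive)

lemma comm_sub_valid_word: "comm_sub n w \<Longrightarrow> valid_word n w"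
  by (induction rule: comm_sub.induct) (auto simp: pure_word_def)

lemma comm_sub_exp_sum: "comm_sub n w \<Longrightarrow> exp_sum w = 0"
  by (induction rule: comm_sub.induct) (auto simp: commutator_word_def dest: braid_eq_exp_sum)

definition sq_commutator :: "bword \<Rightarrow> bword" where
  "sq_commutator g =
     commutator_word (g @ [\<sigma> 2, \<sigma> 2] @ inv_word g) (g @ [\<sigma> 1, \<sigma> 1] @ inv_word g)"

lemma valid_word_sq_commutator: "3 \<le> n \<Longrightarrow> valid_word n g \<Longrightarrow> valid_word n (sq_commutator g)"
  by (simp add: sq_commutator_def)

lemma comm_sub_append_sq_commutator:
  "3 \<le> n \<Longrightarrow> valid_word n g \<Longrightarrow> comm_sub n h \<Longrightarrow> comm_sub n (h @ sq_commutator g)"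
  unfolding sq_commutator_def by (intro comm_sub.snoc pure_word_conj pure_word_square) auto

lemma i_positive_valid_word: "i_positive i w \<Longrightarrow> i < n \<Longrightarrow> valid_word n w"
  by (auto simp: i_positive_def valid_word_def)

lemma dehornoy_pos_if_i_positive: "1 \<le> i \<Longrightarrow> i < n \<Longrightarrow> i_positive i w \<Longrightarrow> dehornoy_pos n w"
  unfolding dehornoy_pos_def by (blast intro: braid_eq.refl)

lemma dehornoy_pos_braid_eq: "dehornoy_pos n w \<Longrightarrow> braid_eq n u w \<Longrightarrow> dehornoy_pos n u"
  unfolding dehornoy_pos_def by (blast intro: braid_eq.trans)

lemma dehornoy_less_append_self:
  assumes "valid_word n h" and "valid_word n c" and "dehornoy_pos n (inv_word c)"
  shows "dehornoy_less n (h @ c) h"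
proof -
  have "braid_eq n (inv_word c @ inv_word h @ h) (inv_word c)"
    by (rule braid_eq_in_context[OF braid_eq_inv_word_cancel, of n h "inv_word c" "[]"])
       (use assms in auto)
  then show ?thesis
    using assms(3) unfolding dehornoy_less_def by (auto intro: dehornoy_pos_braid_eq)
qed

lemma i_positive_conj:
  assumes "i_positive i w" and "\<forall>(j, b) \<in> set g. 1 \<le> j \<and> j < i"
  shows "i_positive i (g @ w @ inv_word g)"
  using assms unfolding i_positive_def by fastforce

lemma i_positive_append:
  assumes "i_positive i w" and "\<forall>(j, b) \<in> set c. 1 \<le> j \<and> j < i"
  shows "i_positive i (w @ c)"
  using assms by (auto simp: i_positive_def)

lemma dehornoy_pos_inv_sq_commutator:
  assumes n: "3 \<le> n" and g: "set g \<subseteq> {\<sigma> 1, \<sigma>_inv 1}"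
  shows "dehornoy_pos n (inv_word (sq_commutator g))"
proof -
  have "valid_word n g" using valid_word_if_sigma1_word[OF g] n by simp
  then have "braid_eq n (inv_word (sq_commutator g))
      (g @ commutator_word [\<sigma> 1, \<sigma> 1] [\<sigma> 2, \<sigma> 2] @ inv_word g)"
    unfolding sq_commutator_def inv_word_commutator_word
    by (rule braid_eq_commutator_word_conj) (use n in auto)
  also have "braid_eq n \<dots> (g @ [\<sigma>_inv 1, \<sigma> 2, \<sigma>_inv 1, \<sigma> 2, \<sigma>_inv 1, \<sigma> 2] @ inv_word g)"
    by (rule braid_eq_in_context[OF braid_eq_commutator_sigma1_sq_sigma2_sq[OF n]])
       (use \<open>valid_word n g\<close> in auto)
  finally have eq: "braid_eq n (inv_word (sq_commutator g))
      (g @ [\<sigma>_inv 1, \<sigma> 2, \<sigma>_inv 1, \<sigma> 2, \<sigma>_inv 1, \<sigma> 2] @ inv_word g)" .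
  have pos: "i_positive 2 (g @ [\<sigma>_inv 1, \<sigma> 2, \<sigma>_inv 1, \<sigma> 2, \<sigma>_inv 1, \<sigma> 2] @ inv_word g)"
    by (rule i_positive_conj) (use g in \<open>auto simp: i_positive_def\<close>)
  show ?thesis
    by (rule dehornoy_pos_braid_eq[OF dehornoy_pos_if_i_positive[OF _ _ pos] eq]) (use n in auto)
qed

lemma dehornoy_pos_append_sq_commutator_Nil:
  assumes "3 \<le> i" and "i < n" and "i_positive i w"
  shows "dehornoy_pos n (w @ sq_commutator [])"
proof (rule dehornoy_pos_if_i_positive)
  show "i_positive i (w @ sq_commutator [])"
    by (rule i_positive_append) (use assms in \<open>auto simp: sq_commutator_def commutator_word_def\<close>)
qed (use assms in auto)

text \<open>Conjugating by $g = s^{-1}\sigma_1$ cancels the tail $s$ of $w$, and the letters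
  $\sigma_2\sigma_1$ left in front of $c_g$ absorb its negative powers of $\sigma_2$.\<close>

lemma dehornoy_pos_append_sq_commutator_2:
  assumes n: "3 \<le> n" and w: "i_positive 2 w"
  obtains g where "set g \<subseteq> {\<sigma> 1, \<sigma>_inv 1}" and "dehornoy_pos n (w @ sq_commutator g)"
proof -
  have "\<sigma> 2 \<in> set w" using w by (simp add: i_positive_def)
  then obtain p s where ps: "w = p @ \<sigma> 2 # s" and "\<sigma> 2 \<notin> set s"
    using split_list_last by metis
  have s: "set s \<subseteq> {\<sigma> 1, \<sigma>_inv 1}"
  proof
    fix x assume "x \<in> set s"
    moreover obtain j b where "x = (j, b)" by force
    moreover have "\<sigma>_inv 2 \<notin> set s" using w ps by (simp add: i_positive_def)
    ultimately show "x \<in> {\<sigma> 1, \<sigma>_inv 1}"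
      using w \<open>\<sigma> 2 \<notin> set s\<close> unfolding i_positive_def ps
      by (cases "j = 1"; cases b) (auto simp: le_Suc_eq numeral_2_eq_2)
  qed
  define g where "g = inv_word s @ [\<sigma> 1]"
  have g: "set g \<subseteq> {\<sigma> 1, \<sigma>_inv 1}" using s by (auto simp: g_def)
  have valid: "valid_word n p" "valid_word n s" "valid_word n g"
    using i_positive_valid_word[OF w] valid_word_if_sigma1_word[OF s] valid_word_if_sigma1_word[OF g] n
    by (auto simp: ps)
  have "braid_eq n (w @ sq_commutator g)
      (w @ g @ commutator_word [\<sigma> 2, \<sigma> 2] [\<sigma> 1, \<sigma> 1] @ inv_word g)"
    unfolding sq_commutator_def
    by (rule braid_eq_in_context[OF braid_eq_commutator_word_conj, of n g _ _ w "[]"])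
       (use valid n in \<open>auto simp: ps\<close>)
  also have "braid_eq n \<dots> (p @ [\<sigma> 2, \<sigma> 1, \<sigma>_inv 2, \<sigma>_inv 2, \<sigma>_inv 1, \<sigma>_inv 1]
      @ [\<sigma> 2, \<sigma> 2, \<sigma> 1, \<sigma> 1] @ inv_word g)"
    by (rule braid_eq_in_context[OF braid_eq_cancel_inv_word, of n s "p @ [\<sigma> 2]"])
       (use valid n in \<open>auto simp: ps g_def commutator_word_def\<close>)
  also have "braid_eq n \<dots> (p @ [\<sigma>_inv 1, \<sigma>_inv 1, \<sigma> 2, \<sigma>_inv 1]
      @ [\<sigma> 2, \<sigma> 2, \<sigma> 1, \<sigma> 1] @ inv_word g)"
    by (rule braid_eq_in_context[OF braid_eq_sigma2_sigma1_sq_inv[OF n]])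
       (use valid n in auto)
  finally have eq: "braid_eq n (w @ sq_commutator g)
      (p @ [\<sigma>_inv 1, \<sigma>_inv 1, \<sigma> 2, \<sigma>_inv 1] @ [\<sigma> 2, \<sigma> 2, \<sigma> 1, \<sigma> 1] @ inv_word g)" .
  have pos: "i_positive 2
      (p @ [\<sigma>_inv 1, \<sigma>_inv 1, \<sigma> 2, \<sigma>_inv 1] @ [\<sigma> 2, \<sigma> 2, \<sigma> 1, \<sigma> 1] @ inv_word g)"
    using w g unfolding i_positive_def ps by auto
  have "dehornoy_pos n (w @ sq_commutator g)"
    by (rule dehornoy_pos_braid_eq[OF dehornoy_pos_if_i_positive[OF _ _ pos] eq]) (use n in auto)
  with g show ?thesis by (rule that)
qed

lemma dehornoy_pos_append_sq_commutator:
  assumes "3 \<le> n" and "2 \<le> i" and "i < n" and "i_positive i w"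
  obtains g where "set g \<subseteq> {\<sigma> 1, \<sigma>_inv 1}" and "dehornoy_pos n (w @ sq_commutator g)"
proof (cases "i = 2")
  case True
  with assms show ?thesis using dehornoy_pos_append_sq_commutator_2 that by blast
next
  case False
  with assms have "3 \<le> i" by simp
  with assms show ?thesis by (intro that[of "[]"] dehornoy_pos_append_sq_commutator_Nil) auto
qed

theorem proposition3p3:
  fixes n :: nat
  assumes "n \<ge> 3"
  shows "densely_ordered n (comm_sub n)"
  unfolding densely_ordered_def
proof (intro allI impI)
  fix h assume "comm_sub n h \<and> dehornoy_pos n h"
  then have h: "comm_sub n h" and "dehornoy_pos n h" by auto
  then obtain i w where "1 \<le> i" "i < n" and w: "i_positive i w" and hw: "braid_eq n h w"
    unfolding dehornoy_pos_def by blast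
  moreover have "i \<noteq> 1"
    using exp_sum_pos_if_1_positive braid_eq_exp_sum[OF hw] comm_sub_exp_sum[OF h] w by force
  ultimately have "2 \<le> i" by simp
  then obtain g where g: "set g \<subseteq> {\<sigma> 1, \<sigma>_inv 1}"
    and pos: "dehornoy_pos n (w @ sq_commutator g)"
    using dehornoy_pos_append_sq_commutator[OF assms _ \<open>i < n\<close> w] by blast
  have "valid_word n g" using valid_word_if_sigma1_word[OF g] assms by simp
  then have valid: "valid_word n (sq_commutator g)" using valid_word_sq_commutator assms by blast
  have "comm_sub n (h @ sq_commutator g)"
    using comm_sub_append_sq_commutator assms \<open>valid_word n g\<close> h by blast
  moreover have "dehornoy_pos n (h @ sq_commutator g)"
    by (rule dehornoy_pos_braid_eq[OF pos braid_eq_in_context[OF hw, of "[]"]]) (use valid in auto)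
  moreover have "dehornoy_less n (h @ sq_commutator g) h"
    using dehornoy_less_append_self comm_sub_valid_word[OF h] valid
      dehornoy_pos_inv_sq_commutator[OF assms g] by blast
  ultimately show "\<exists>h'. comm_sub n h' \<and> dehornoy_pos n h' \<and> dehornoy_less n h' h" by blast
qed

end
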